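(* Let $\mathcal{M}$ be the set of compactly supported probability distributions on $\mathbb{R}$ and $\rho:\mathcal{M}\to\mathbb{R}$. Then $\{u\circ\rho: u\in\mathcal{F}_U\}=\{\rho\circ T^u: u\in\mathcal{F}_U\}$ if and only if there exist a strictly monotone, continuous, surjective $h:\mathbb{R}\to\mathbb{R}$ and a quantile $\widehat\rho:\mathcal{M}\to\mathbb{R}$ such that $\rho=h\circ\widehat\rho$.
   Context: $\mathcal{F}_U$ is the set of increasing (non-decreasing) continuous functions $u:\mathbb{R}\to\mathbb{R}$; $T^u(F)$ is the distribution of $u(X)$ when $X\sim F$. For a cdf $F$, $F_L^{-1}(t)=\inf\{x:F(x)\ge t\}$ for $t\in(0,1]$ and $F_R^{-1}(t)=\inf\{x:F(x)>t\}$ for $t\in[0,1)$. A map $\widehat\rho:\mathcal{M}\to\mathbb{R}$ is a quantile if either there is $p\in(0,1]$ with $\widehat\rho(F)=F_L^{-1}(p)$ for all $F$, or there is $p\in[0,1)$ with $\widehat\rho(F)=F_R^{-1}(p)$ for all $F$. *)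

theory Defs
  imports "HOL-Probability.Probability"
begin

definition compact_distrs :: "real measure set" where
  "compact_distrs = {F. prob_space F \<and> sets F = sets borel \<and>
                        (\<exists>K. compact K \<and> emeasure F K = 1)}"

definition FU :: "(real \<Rightarrow> real) set" where
  "FU = {u. mono u \<and> continuous_on UNIV u}"

definition Tu :: "(real \<Rightarrow> real) \<Rightarrow> real measure \<Rightarrow> real measure" where
  "Tu u F = distr F borel u"

definition qL :: "real \<Rightarrow> real measure \<Rightarrow> real" where
  "qL t F = Inf {x. cdf F x \<ge> t}"

definition qR :: "real \<Rightarrow> real measure \<Rightarrow> real" where
  "qR t F = Inf {x. cdf F x > t}"

definition is_quantile :: "(real measure \<Rightarrow> real) \<Rightarrow> bool" where
  "is_quantile rh \<longleftrightarrow>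
     (\<exists>p\<in>{0<..1}. \<forall>F\<in>compact_distrs. rh F = qL p F) \<or>
     (\<exists>p\<in>{0..<1}. \<forall>F\<in>compact_distrs. rh F = qR p F)"

end

(* A quantile commutes with every increasing continuous transformation: qL p (T^u F) = u (qL p F),
   and likewise for qR.  Conversely every functional r with this equivariance is a quantile:
   applied to the law of 1{X > c}, which depends on F only through F(c), r returns 1 when
   c < r F and 0 when r F < c, so r F is the infimum of a level set {x. P (F x)} of the cdf,
   and the level p is r of the uniform distribution on [0, 1].

   Given rho = h o rh with rh equivariant, conjugating by h turns u o rho into
   rho o T^(h^-1 o u o h), and rho o T^v into (h o v o h^-1) o rho.  Conversely, if the two
   families coincide, g x = rho (delta x) is surjective (take u constant) and intertwines
   increasing continuous maps with increasing continuous maps; affine maps force g to be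
   injective and clamps force it to be strictly monotone, after which g^-1 o rho is
   equivariant. *)

theory Submission
  imports Defs
begin

section \<open>Compactly supported distributions\<close>

lemma real_distribution_compact_distrs:
  "F \<in> compact_distrs \<Longrightarrow> real_distribution F"
  unfolding compact_distrs_def real_distribution_def real_distribution_axioms_def by auto

lemma compact_distrs_obtain_support:
  assumes "F \<in> compact_distrs"
  obtains K where "compact K" "emeasure F K = 1"
  using assms unfolding compact_distrs_def by auto

lemma distr_in_compact_distrs:
  assumes F: "F \<in> compact_distrs" and f: "f \<in> borel_measurable borel"
    and bounded_image: "\<And>K. compact K \<Longrightarrow> bounded (f ` K)"
  shows "distr F borel f \<in> compact_distrs"
proof -
  interpret real_distribution F by (rule real_distribution_compact_distrs[OF F])
  obtain K where K: "compact K" "emeasure F K = 1"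
    using F by (rule compact_distrs_obtain_support)
  let ?L = "closure (f ` K)"
  have L: "compact ?L" using bounded_image[OF K(1)] by (simp add: compact_closure)
  have "emeasure F K \<le> emeasure F (f -` ?L)"
    using L measurable_sets_borel[OF f, of ?L]
    by (intro emeasure_mono) (auto intro: closure_subset[THEN subsetD] simp: compact_imp_closed)
  moreover have "emeasure (distr F borel f) ?L = emeasure F (f -` ?L)"
    using L f by (subst emeasure_distr) (auto simp: compact_imp_closed)
  ultimately have "emeasure (distr F borel f) ?L = 1"
    using K(2) emeasure_le_1[of "f -` ?L"] by simp
  moreover have "prob_space (distr F borel f)"
    using f by (intro prob_space_distr) simp
  ultimately show ?thesis
    using L unfolding compact_distrs_def by (auto intro!: exI[of _ ?L])
qed

lemma FU_borel_measurable: "u \<in> FU \<Longrightarrow> u \<in> borel_measurable borel"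
  by (simp add: FU_def borel_measurable_continuous_onI)

lemma Tu_in_compact_distrs: "F \<in> compact_distrs \<Longrightarrow> u \<in> FU \<Longrightarrow> Tu u F \<in> compact_distrs"
  unfolding Tu_def using FU_borel_measurable
  by (auto intro!: distr_in_compact_distrs compact_imp_bounded compact_continuous_image
      simp: FU_def intro: continuous_on_subset)

lemma return_in_compact_distrs: "return borel (x::real) \<in> compact_distrs"
  unfolding compact_distrs_def by (auto intro!: exI[of _ "{x}"] prob_space_return)

lemma Tu_return: "u \<in> FU \<Longrightarrow> Tu u (return borel x) = return borel (u x)"
  unfolding Tu_def by (simp add: distr_return FU_borel_measurable)

lemma Tu_distr:
  assumes "sets F = sets borel" "f \<in> borel_measurable borel" "u \<in> FU"
  shows "Tu u (distr F borel f) = distr F borel (u \<circ> f)"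
proof -
  have "f \<in> measurable F borel" using assms(1,2) by (simp cong: measurable_cong_sets)
  then show ?thesis unfolding Tu_def using assms(3) by (simp add: distr_distr FU_borel_measurable)
qed

lemma real_distribution_distr_borel:
  assumes "real_distribution F" "f \<in> borel_measurable borel"
  shows "real_distribution (distr F borel f)"
proof -
  interpret real_distribution F by fact
  show ?thesis using assms(2) by simp
qed

lemma cdf_distr:
  assumes "real_distribution F" "f \<in> borel_measurable borel"
  shows "cdf (distr F borel f) x = measure F {y. f y \<le> x}"
proof -
  interpret real_distribution F by fact
  show ?thesis unfolding cdf_def using assms(2)
    by (simp add: measure_distr vimage_def)
qed

lemma compact_distrs_cdf_eventually:
  assumes F: "F \<in> compact_distrs"
  obtains B where "\<And>x. B \<le> x \<Longrightarrow> cdf F x = 1" "\<And>x. x < -B \<Longrightarrow> cdf F x = 0"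
proof -
  interpret real_distribution F by (rule real_distribution_compact_distrs[OF F])
  obtain K where K: "compact K" "emeasure F K = 1"
    using F by (rule compact_distrs_obtain_support)
  obtain B where B: "\<forall>x\<in>K. \<bar>x\<bar> \<le> B"
    using compact_imp_bounded[OF K(1)] bounded_real by blast
  have K_events: "K \<in> events" by (simp add: K(1) compact_imp_closed)
  have prob_K: "prob K = 1" using K(2) by (simp add: emeasure_eq_measure)
  show thesis
  proof
    fix x assume "B \<le> x"
    then have "K \<subseteq> {..x}" using B by force
    then show "cdf F x = 1"
      unfolding cdf_def using prob_K K_events finite_measure_mono[of K "{..x}"] prob_le_1[of "{..x}"]
      by simp
  next
    fix x assume "x < -B"
    then have "{..x} \<subseteq> UNIV - K" using B by force
    moreover have "prob (UNIV - K) = 0" using prob_compl[OF K_events] prob_K by simp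
    ultimately show "cdf F x = 0"
      unfolding cdf_def using finite_measure_mono[of "{..x}" "UNIV - K"] K_events measure_nonneg[of F "{..x}"]
      by simp
  qed
qed

section \<open>Quantiles are the equivariant functionals\<close>

lemma Inf_eq_threshold:
  fixes S :: "real set"
  assumes below: "\<And>c. c < q \<Longrightarrow> c \<notin> S" and above: "\<And>c. q < c \<Longrightarrow> c \<in> S"
  shows "Inf S = q"
proof (rule antisym)
  have lower: "q \<le> x" if "x \<in> S" for x
    using below that by (meson not_less)
  then have bdd: "bdd_below S" by (rule bdd_belowI)
  show "q \<le> Inf S"
    using above[of "q + 1"] lower by (intro cInf_greatest) auto
  show "Inf S \<le> q"
  proof (rule dense_ge)
    show "Inf S \<le> c" if "q < c" for c
      using above[OF that] by (rule cInf_lower[OF _ bdd])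
  qed
qed

lemma cdf_level_Inf:
  assumes F: "F \<in> compact_distrs" and P_mono: "mono P"
    and not_P0: "\<not> P 0" and P1: "P 1"
  shows "c < Inf {x. P (cdf F x)} \<Longrightarrow> \<not> P (cdf F c)"
    and "Inf {x. P (cdf F x)} < c \<Longrightarrow> P (cdf F c)"
proof -
  interpret real_distribution F by (rule real_distribution_compact_distrs[OF F])
  let ?S = "{x. P (cdf F x)}"
  obtain B where B: "\<And>x. B \<le> x \<Longrightarrow> cdf F x = 1" "\<And>x. x < -B \<Longrightarrow> cdf F x = 0"
    using compact_distrs_cdf_eventually[OF F] by blast
  have "-B \<le> x" if "x \<in> ?S" for x
    using that B(2)[of x] not_P0 by (cases "x < -B") auto
  then have bdd: "bdd_below ?S" by (rule bdd_belowI)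
  have nonempty: "B \<in> ?S" using B(1) P1 by simp
  show "\<not> P (cdf F c)" if "c < Inf ?S"
    using that cInf_lower[OF _ bdd, of c] by auto
  show "P (cdf F c)" if less: "Inf ?S < c"
  proof -
    obtain x where "P (cdf F x)" "x < c"
      using less cInf_less_iff[of ?S c] nonempty bdd by auto
    then show ?thesis using P_mono cdf_nondecreasing[of x c] by (auto dest: monoD)
  qed
qed

lemma Inf_cdf_level_Tu:
  assumes F: "F \<in> compact_distrs" and u: "u \<in> FU"
    and P_mono: "mono P" and not_P0: "\<not> P 0" and P1: "P 1"
  shows "Inf {x. P (cdf (Tu u F) x)} = u (Inf {x. P (cdf F x)})"
proof -
  interpret real_distribution F by (rule real_distribution_compact_distrs[OF F])
  define q where "q = Inf {x. P (cdf F x)}"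
  note level = cdf_level_Inf[OF F P_mono not_P0 P1, folded q_def]
  have u_mono: "mono u" and u_cont: "continuous_on UNIV u" using u by (auto simp: FU_def)
  have sublevel_closed: "closed {y. u y \<le> c}" for c
    using u_cont by (intro closed_Collect_le continuous_intros) auto
  have cdf_Tu: "cdf (Tu u F) c = prob {y. u y \<le> c}" for c
    unfolding Tu_def using real_distribution_axioms FU_borel_measurable[OF u] by (rule cdf_distr)
  show ?thesis
    unfolding q_def[symmetric]
  proof (rule Inf_eq_threshold, unfold mem_Collect_eq cdf_Tu)
    fix c assume "c < u q"
    then have sublevel_below: "y < q" if "u y \<le> c" for y
      using that u_mono by (metis monoD not_le order.trans)
    show "\<not> P (prob {y. u y \<le> c})"
    proof (cases "{y. u y \<le> c} = {}")
      case False
      let ?m = "Sup {y. u y \<le> c}"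
      have bdd: "bdd_above {y. u y \<le> c}"
        using sublevel_below by (intro bdd_aboveI[of _ q]) (simp add: less_imp_le)
      have "u ?m \<le> c"
        using closed_contains_Sup[OF False bdd sublevel_closed] by simp
      then have "\<not> P (cdf F ?m)" using level(1) sublevel_below by blast
      moreover have "prob {y. u y \<le> c} \<le> cdf F ?m"
        unfolding cdf_def using cSup_upper[OF _ bdd]
        by (intro finite_measure_mono) auto
      ultimately show ?thesis using P_mono by (auto dest: monoD)
    qed (simp add: not_P0)
  next
    fix c assume "u q < c"
    have "(u \<longlongrightarrow> u q) (at_right q)"
      using u_cont unfolding continuous_on_def by (auto intro: tendsto_within_subset)
    then have "\<forall>\<^sub>F y in at_right q. q < y \<and> u y < c"
      using \<open>u q < c\<close> by (intro eventually_conj eventually_at_right_less order_tendstoD(2))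
    then obtain y where "q < y" "u y < c"
      using eventually_happens'[OF trivial_limit_at_right_real] by blast
    then have "P (cdf F y)" using level(2) by blast
    moreover have "cdf F y \<le> prob {z. u z \<le> c}"
      unfolding cdf_def using \<open>u y < c\<close> sublevel_closed monoD[OF u_mono]
      by (intro finite_measure_mono) force+
    ultimately show "P (prob {y. u y \<le> c})" using P_mono by (auto dest: monoD)
  qed
qed

definition FU_equivariant :: "(real measure \<Rightarrow> real) \<Rightarrow> bool" where
  "FU_equivariant r \<longleftrightarrow> (\<forall>u\<in>FU. \<forall>F\<in>compact_distrs. r (Tu u F) = u (r F))"

lemma FU_equivariant_if_quantile:
  assumes "is_quantile r"
  shows "FU_equivariant r"
  unfolding FU_equivariant_def
proof (intro ballI)
  fix u F assume u: "u \<in> FU" and F: "F \<in> compact_distrs"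
  note Tu_F = Tu_in_compact_distrs[OF F u]
  from assms consider
      (left) p where "p \<in> {0<..1}" "\<forall>G\<in>compact_distrs. r G = qL p G"
    | (right) p where "p \<in> {0..<1}" "\<forall>G\<in>compact_distrs. r G = qR p G"
    unfolding is_quantile_def by blast
  then show "r (Tu u F) = u (r F)"
  proof cases
    case left
    then show ?thesis
      using Inf_cdf_level_Tu[OF F u, of "\<lambda>s. p \<le> s"] F Tu_F by (simp add: qL_def mono_def)
  next
    case right
    then show ?thesis
      using Inf_cdf_level_Tu[OF F u, of "\<lambda>s. p < s"] F Tu_F by (simp add: qR_def mono_def)
  qed
qed

lemma cdf_distr_indicator_greaterThan:
  assumes "real_distribution F"
  shows "cdf (distr F borel (indicator {c<..} :: real \<Rightarrow> real)) x =
    (if x < 0 then 0 else if x < 1 then cdf F c else 1)"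
proof -
  interpret real_distribution F by fact
  have "{y. (indicator {c<..} y :: real) \<le> x} = (if x < 0 then {} else if x < 1 then {..c} else UNIV)"
    by (auto simp: indicator_def)
  then show ?thesis
    using cdf_distr[OF assms, of "indicator {c<..}" x] prob_space by (simp add: cdf_def)
qed

lemma distr_indicator_greaterThan_eq:
  assumes "real_distribution F" "real_distribution G" "cdf F c = cdf G d"
  shows "distr F borel (indicator {c<..} :: real \<Rightarrow> real) = distr G borel (indicator {d<..})"
  using assms
  by (intro cdf_unique real_distribution_distr_borel)
    (auto simp: fun_eq_iff cdf_distr_indicator_greaterThan)

lemma FU_equivariant_return:
  assumes "FU_equivariant r"
  shows "r (return borel x) = x"
proof -
  have "(\<lambda>_. x) \<in> FU" by (simp add: FU_def mono_def)
  then show ?thesis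
    using assms return_in_compact_distrs Tu_return
    unfolding FU_equivariant_def by metis
qed

lemma FU_equivariant_distr_indicator_greaterThan:
  assumes r: "FU_equivariant r" and F: "F \<in> compact_distrs"
  shows "c < r F \<Longrightarrow> r (distr F borel (indicator {c<..})) = 1"
    and "r F < c \<Longrightarrow> r (distr F borel (indicator {c<..})) = 0"
proof -
  have sets_F: "sets F = sets borel" using F by (simp add: compact_distrs_def)
  \<comment> \<open>Lifting the mass above c by one makes both F and the law of 1{X > c} increasing
    continuous images of a single distribution, by merge and by step respectively.\<close>
  define split where "split y = y + indicator {c<..} y" for y :: real
  define merge where "merge y = min y c + max 0 (y - c - 1)" for y :: real
  define step where "step y = max 0 (min 1 (y - c))" for y :: real
  have split_measurable: "split \<in> borel_measurable borel"
    unfolding split_def by measurable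
  have "bounded (split ` K)" if K: "compact K" for K
  proof -
    obtain B where "\<forall>x\<in>K. \<bar>x\<bar> \<le> B"
      using compact_imp_bounded[OF K] bounded_real by blast
    then have "split ` K \<subseteq> {-B..B + 1}" by (force simp: split_def indicator_def)
    then show ?thesis by (rule bounded_subset[OF bounded_closed_interval])
  qed
  then have H: "distr F borel split \<in> compact_distrs"
    using F split_measurable by (intro distr_in_compact_distrs)
  have merge: "merge \<in> FU" and step: "step \<in> FU"
    unfolding merge_def step_def FU_def by (auto simp: mono_def intro!: continuous_intros)
  have "merge \<circ> split = (\<lambda>y. y)" and "step \<circ> split = indicator {c<..}"
    by (auto simp: fun_eq_iff merge_def step_def split_def indicator_def)
  then have "Tu merge (distr F borel split) = F"
    and "Tu step (distr F borel split) = distr F borel (indicator {c<..})"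
    using Tu_distr[OF sets_F split_measurable] merge step sets_F by (simp_all add: distr_id2)
  then have "r F = merge (r (distr F borel split))"
    and "r (distr F borel (indicator {c<..})) = step (r (distr F borel split))"
    using r H merge step unfolding FU_equivariant_def by metis+
  then show "c < r F \<Longrightarrow> r (distr F borel (indicator {c<..})) = 1"
    and "r F < c \<Longrightarrow> r (distr F borel (indicator {c<..})) = 0"
    by (auto simp: merge_def step_def)
qed

lemma uniform_01_in_compact_distrs: "uniform_measure lborel {0..1::real} \<in> compact_distrs"
  unfolding compact_distrs_def
  by (auto intro!: prob_space_uniform_measure exI[of _ "{0..1::real}"])

lemma cdf_uniform_01:
  assumes "0 \<le> t" "t \<le> 1"
  shows "cdf (uniform_measure lborel {0..1}) t = t"
proof -
  have "{0..1} \<inter> {..t} = {0..t}" using assms by auto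
  then show ?thesis
    using assms by (simp add: cdf_def measure_def divide_ennreal_def)
qed

lemma is_quantileI:
  assumes not_P0: "\<not> P 0" and P1: "P 1"
    and threshold: "\<And>t. 0 \<le> t \<Longrightarrow> t \<le> 1 \<Longrightarrow> t < p \<Longrightarrow> \<not> P t"
      "\<And>t. 0 \<le> t \<Longrightarrow> t \<le> 1 \<Longrightarrow> p < t \<Longrightarrow> P t"
    and r: "\<And>F. F \<in> compact_distrs \<Longrightarrow> r F = Inf {x. P (cdf F x)}"
  shows "is_quantile r"
proof -
  have p: "0 \<le> p" "p \<le> 1"
    using threshold[of 0] threshold[of 1] not_P0 P1 by (meson not_le order.refl zero_le_one)+
  have level_set: "{x. P (cdf F x)} = {x. Q (cdf F x)}"
    if F: "F \<in> compact_distrs" and PQ: "\<And>t. 0 \<le> t \<Longrightarrow> t \<le> 1 \<Longrightarrow> P t \<longleftrightarrow> Q t" for F Q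
  proof -
    interpret real_distribution F by (rule real_distribution_compact_distrs[OF F])
    show ?thesis using PQ cdf_nonneg cdf_bounded_prob by blast
  qed
  show ?thesis
  proof (cases "P p")
    case True
    then have "P t \<longleftrightarrow> p \<le> t" if "0 \<le> t" "t \<le> 1" for t
      using threshold that by (cases t p rule: linorder_cases) auto
    moreover have "0 < p" using True not_P0 p by (cases "p = 0") auto
    ultimately show ?thesis
      unfolding is_quantile_def qL_def using p r level_set by auto
  next
    case False
    then have "P t \<longleftrightarrow> p < t" if "0 \<le> t" "t \<le> 1" for t
      using threshold that by (cases t p rule: linorder_cases) auto
    moreover have "p < 1" using False P1 p by (cases "p = 1") auto
    ultimately show ?thesis
      unfolding is_quantile_def qR_def using p r level_set by auto
  qed
qed

lemma quantile_if_FU_equivariant: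
  assumes r: "FU_equivariant r"
  shows "is_quantile r"
proof -
  define U where "U = uniform_measure lborel {0..1::real}"
  define P where "P t \<longleftrightarrow> r (distr U borel (indicator {t<..})) = 0" for t
  have U: "U \<in> compact_distrs" unfolding U_def by (rule uniform_01_in_compact_distrs)
  \<comment> \<open>The law of 1{X > c} depends on F only through F(c), so it is the one of U
    at level F(c).\<close>
  have level: "P (cdf F c) \<longleftrightarrow> r (distr F borel (indicator {c<..})) = 0"
    if F: "F \<in> compact_distrs" for F c
  proof -
    interpret real_distribution F by (rule real_distribution_compact_distrs[OF F])
    have "cdf U (cdf F c) = cdf F c"
      unfolding U_def using cdf_nonneg cdf_bounded_prob by (intro cdf_uniform_01)
    then show ?thesis
      unfolding P_def using real_distribution_axioms real_distribution_compact_distrs[OF U]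
      by (metis distr_indicator_greaterThan_eq)
  qed
  note indicator_law = FU_equivariant_distr_indicator_greaterThan[OF r]
  have below: "\<not> P (cdf F c)" if "F \<in> compact_distrs" "c < r F" for F c
    using level indicator_law(1) that by simp
  have above: "P (cdf F c)" if "F \<in> compact_distrs" "r F < c" for F c
    using level indicator_law(2) that by simp
  note return_0 = return_in_compact_distrs[of 0] FU_equivariant_return[OF r, of 0]
  show ?thesis
  proof (rule is_quantileI[where p = "r U"])
    show "\<not> P 0" using below[of "return borel 0" "-1"] return_0 by (simp add: cdf_def measure_return)
    show "P 1" using above[of "return borel 0" 1] return_0 by (simp add: cdf_def measure_return)
    show "\<not> P t" if "0 \<le> t" "t \<le> 1" "t < r U" for t
      using below[OF U, of t] that cdf_uniform_01 by (simp add: U_def)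
    show "P t" if "0 \<le> t" "t \<le> 1" "r U < t" for t
      using above[OF U, of t] that cdf_uniform_01 by (simp add: U_def)
    show "r F = Inf {x. P (cdf F x)}" if "F \<in> compact_distrs" for F
      using below above that by (intro Inf_eq_threshold[symmetric]) auto
  qed
qed

theorem FU_equivariant_iff_quantile: "FU_equivariant r \<longleftrightarrow> is_quantile r"
  using FU_equivariant_if_quantile quantile_if_FU_equivariant by blast

section \<open>Monotone functions of the real line\<close>

lemma continuous_on_if_monotone_surj:
  fixes f :: "real \<Rightarrow> real"
  assumes "mono f \<or> antimono f" and "surj f"
  shows "continuous_on UNIV f"
  using assms(1)
proof
  assume "mono f"
  then show ?thesis using assms(2) by (intro continuous_onI_mono) (auto dest: monoD)
next
  assume "antimono f"
  moreover have "surj (\<lambda>x. - f x)" using assms(2) by (metis surj_def minus_minus)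
  ultimately have "continuous_on UNIV (\<lambda>x. - f x)"
    by (intro continuous_onI_mono) (auto dest: antimonoD)
  then show ?thesis using continuous_on_minus by fastforce
qed

lemma strict_monotone_surj_inv:
  fixes h :: "real \<Rightarrow> real"
  assumes h: "strict_mono h \<or> strict_antimono_on UNIV h" and "surj h"
  shows "bij h" and "(mono h \<and> mono (inv h)) \<or> (antimono h \<and> antimono (inv h))"
proof -
  have "inj h" using h by (intro linorder_injI) (fastforce simp: strict_mono_def monotone_on_def)
  then show "bij h" using \<open>surj h\<close> by (simp add: bij_def)
  show "(mono h \<and> mono (inv h)) \<or> (antimono h \<and> antimono (inv h))"
    using h
  proof
    assume "strict_mono h"
    then show ?thesis
      using \<open>bij h\<close> by (simp add: strict_mono_mono mono_inv)
  next
    assume dec: "strict_antimono_on UNIV h"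
    then have "antimono h"
      by (auto simp: antimono_def monotone_on_def le_less)
    moreover have "antimono (inv h)"
    proof (rule antimonoI, rule ccontr)
      fix x y assume "x \<le> y" "\<not> inv h y \<le> inv h x"
      then have "h (inv h y) < h (inv h x)" using dec by (simp add: monotone_on_def)
      then show False using \<open>x \<le> y\<close> \<open>surj h\<close> by (simp add: surj_f_inv_f)
    qed
    ultimately show ?thesis by blast
  qed
qed

lemma mono_conjugate:
  assumes "(mono h \<and> mono k) \<or> (antimono h \<and> antimono k)" and "mono u"
  shows "mono (\<lambda>x. h (u (k x)))"
  using assms by (auto simp: mono_def antimono_def)

lemma FU_conjugate:
  fixes h :: "real \<Rightarrow> real"
  assumes h: "strict_mono h \<or> strict_antimono_on UNIV h" "surj h" and u: "u \<in> FU"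
  shows "(\<lambda>x. inv h (u (h x))) \<in> FU" and "(\<lambda>x. h (u (inv h x))) \<in> FU"
proof -
  note monotone = strict_monotone_surj_inv[OF h]
  have "surj (inv h)" using monotone(1) by (simp add: bij_betw_inv_into bij_is_surj)
  then have cont: "continuous_on UNIV h" "continuous_on UNIV (inv h)"
    using monotone(2) h(2) by (auto intro: continuous_on_if_monotone_surj)
  have u': "mono u" "continuous_on UNIV u" using u by (auto simp: FU_def)
  have cont_comp: "continuous_on UNIV (\<lambda>x. f (u (g x)))"
    if "continuous_on UNIV f" "continuous_on UNIV g" for f g :: "real \<Rightarrow> real"
  proof -
    have "continuous_on UNIV (\<lambda>x. u (g x))"
      by (rule continuous_on_compose2[OF u'(2) that(2)]) simp
    then show ?thesis by (rule continuous_on_compose2[OF that(1)]) simp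
  qed
  have "(mono (inv h) \<and> mono h) \<or> (antimono (inv h) \<and> antimono h)"
    using monotone(2) by blast
  then show "(\<lambda>x. inv h (u (h x))) \<in> FU"
    unfolding FU_def using mono_conjugate u'(1) cont_comp[OF cont(2) cont(1)] by blast
  show "(\<lambda>x. h (u (inv h x))) \<in> FU"
    unfolding FU_def using mono_conjugate[OF monotone(2) u'(1)] cont_comp[OF cont] by blast
qed

lemma inj_if_intertwines_FU:
  fixes g :: "real \<Rightarrow> real"
  assumes intertwines: "\<And>v. v \<in> FU \<Longrightarrow> \<exists>u\<in>FU. \<forall>x. g (v x) = u (g x)"
    and nonconstant: "g a \<noteq> g b"
  shows "inj g"
proof (rule linorder_injI, rule notI)
  fix x y assume "x < y" "g x = g y"
  \<comment> \<open>An increasing affine map sends x, y to any s < t, so g would be constant.\<close>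
  have const: "g s = g t" if "s < t" for s t
  proof -
    define v where "v z = s + (z - x) * ((t - s) / (y - x))" for z
    have "v \<in> FU"
      unfolding v_def FU_def using \<open>x < y\<close> \<open>s < t\<close>
      by (intro CollectI conjI monoI add_left_mono mult_right_mono diff_right_mono continuous_intros)
        auto
    then obtain u where "\<forall>z. g (v z) = u (g z)" using intertwines by blast
    moreover have "v x = s" "v y = t" using \<open>x < y\<close> by (simp_all add: v_def)
    ultimately show ?thesis using \<open>g x = g y\<close> by metis
  qed
  show False
    using nonconstant by (cases a b rule: linorder_cases) (auto dest: const)
qed

lemma FU_clamp: "(\<lambda>t. max a (min b t)) \<in> FU"
  by (auto simp: FU_def mono_def intro!: continuous_intros)

lemma between_if_intertwines_FU:
  fixes g :: "real \<Rightarrow> real"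
  assumes intertwines: "\<And>v. v \<in> FU \<Longrightarrow> \<exists>u\<in>FU. \<forall>x. g (v x) = u (g x)"
    and "inj g" and "x < y" "y < z"
  shows "(g x < g y \<and> g y < g z) \<or> (g z < g y \<and> g y < g x)"
proof -
  \<comment> \<open>Clamping to [x, y] fixes g x and g y and moves g z to g y; a monotone u1 with
    g o clamp = u1 o g therefore cannot have g x strictly between g y and g z.\<close>
  have squeeze: "u c = u a" if "u \<in> FU" "a \<le> c" "c \<le> b" "u a = u b" for u a b c
  proof -
    have "mono u" using that(1) by (simp add: FU_def)
    then show ?thesis using monoD[of u a c] monoD[of u c b] that(2-4) by linarith
  qed
  have distinct: "g x \<noteq> g y" "g y \<noteq> g z" "g x \<noteq> g z"
    using \<open>x < y\<close> \<open>y < z\<close> by (auto simp: inj_eq[OF \<open>inj g\<close>])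
  obtain u1 where u1: "u1 \<in> FU" "\<forall>t. g (max x (min y t)) = u1 (g t)"
    using intertwines[OF FU_clamp] by blast
  then have "u1 (g x) = g x" "u1 (g y) = g y" "u1 (g z) = g y"
    using \<open>x < y\<close> \<open>y < z\<close> by (simp_all add: min_def max_def flip: u1(2))
  then have "\<not> (g y < g x \<and> g x < g z)" "\<not> (g z < g x \<and> g x < g y)"
    using squeeze[OF u1(1), of "g y" "g x" "g z"] squeeze[OF u1(1), of "g z" "g x" "g y"] distinct
    by auto
  moreover obtain u2 where u2: "u2 \<in> FU" "\<forall>t. g (max y (min z t)) = u2 (g t)"
    using intertwines[OF FU_clamp] by blast
  then have "u2 (g x) = g y" "u2 (g y) = g y" "u2 (g z) = g z"
    using \<open>x < y\<close> \<open>y < z\<close> by (simp_all add: min_def max_def flip: u2(2))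
  then have "\<not> (g x < g z \<and> g z < g y)" "\<not> (g y < g z \<and> g z < g x)"
    using squeeze[OF u2(1), of "g x" "g z" "g y"] squeeze[OF u2(1), of "g y" "g z" "g x"] distinct
    by auto
  ultimately show ?thesis
    using distinct by (meson linorder_neqE_linordered_idom)
qed

lemma strict_monotone_if_between:
  fixes g :: "real \<Rightarrow> 'a::linorder"
  assumes between: "\<And>x y z. x < y \<Longrightarrow> y < z \<Longrightarrow> (g x < g y \<and> g y < g z) \<or> (g z < g y \<and> g y < g x)"
  shows "strict_mono g \<or> strict_antimono_on UNIV g"
proof -
  have chain: "g p < g q \<longleftrightarrow> g l < g r" if "l < p" "p < q" "q < r" for l p q r
    using between[of l p q] between[of l q r] that by auto
  have same_direction: "g a < g b \<longleftrightarrow> g 0 < g 1" if "a < b" for a b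
    using chain[of "min a 0 - 1" a b "max b 1 + 1"] chain[of "min a 0 - 1" 0 1 "max b 1 + 1"] that
    by simp
  have "g a \<noteq> g b" if "a < b" for a b
    using between[of a b "b + 1"] that by auto
  then show ?thesis
    using same_direction unfolding strict_mono_def monotone_on_def
    by (cases "g 0 < g 1") (auto simp: not_less_iff_gr_or_eq)
qed

lemma strict_monotone_if_intertwines_FU:
  fixes g :: "real \<Rightarrow> real"
  assumes intertwines: "\<And>v. v \<in> FU \<Longrightarrow> \<exists>u\<in>FU. \<forall>x. g (v x) = u (g x)"
    and nonconstant: "g a \<noteq> g b"
  shows "strict_mono g \<or> strict_antimono_on UNIV g"
  using between_if_intertwines_FU[OF intertwines inj_if_intertwines_FU[OF intertwines nonconstant]]
  by (rule strict_monotone_if_between)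

lemma Setcompr_restrict_eq_iff:
  "{restrict (f u) A | u. u \<in> U} = {restrict (g u) A | u. u \<in> U} \<longleftrightarrow>
    (\<forall>u\<in>U. \<exists>v\<in>U. \<forall>x\<in>A. f u x = g v x) \<and> (\<forall>v\<in>U. \<exists>u\<in>U. \<forall>x\<in>A. g v x = f u x)"
proof -
  have restrict_eq: "restrict f' A = restrict g' A \<longleftrightarrow> (\<forall>x\<in>A. f' x = g' x)" for f' g'
    by (metis restrict_apply' restrict_ext)
  show ?thesis unfolding restrict_eq[symmetric] by blast
qed

lemma equivariant_factorization_if_FU_families_eq:
  fixes \<rho> :: "real measure \<Rightarrow> real"
  assumes A: "\<forall>u\<in>FU. \<exists>v\<in>FU. \<forall>F\<in>compact_distrs. u (\<rho> F) = \<rho> (Tu v F)"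
    and B: "\<forall>v\<in>FU. \<exists>u\<in>FU. \<forall>F\<in>compact_distrs. \<rho> (Tu v F) = u (\<rho> F)"
  shows "\<exists>h rh. (strict_mono h \<or> strict_antimono_on UNIV h) \<and> surj h \<and> FU_equivariant rh
    \<and> (\<forall>F\<in>compact_distrs. \<rho> F = h (rh F))"
proof -
  define g where "g x = \<rho> (return borel x)" for x
  have intertwines: "\<exists>u\<in>FU. \<forall>x. g (v x) = u (g x)" if v: "v \<in> FU" for v
  proof -
    obtain u where u: "u \<in> FU" "\<forall>F\<in>compact_distrs. \<rho> (Tu v F) = u (\<rho> F)"
      using B v by blast
    have "g (v x) = u (g x)" for x
      using u(2) Tu_return[OF v, of x] return_in_compact_distrs[of x] unfolding g_def by metis
    with u(1) show ?thesis by blast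
  qed
  have "surj g"
    unfolding surj_def
  proof
    fix a
    have "(\<lambda>_. a) \<in> FU" by (simp add: FU_def mono_def)
    then obtain v where "v \<in> FU" "\<forall>F\<in>compact_distrs. a = \<rho> (Tu v F)"
      using bspec[OF A] by auto
    then have "a = g (v 0)"
      using Tu_return[of v 0] return_in_compact_distrs[of 0] unfolding g_def by metis
    then show "\<exists>x. a = g x" ..
  qed
  then obtain z where "g z = g 0 + 1" by (metis surjD)
  then have monotone: "strict_mono g \<or> strict_antimono_on UNIV g"
    using strict_monotone_if_intertwines_FU[OF intertwines, of z 0] by simp
  then have "bij g" using \<open>surj g\<close> by (rule strict_monotone_surj_inv(1))
  define rh where "rh F = inv g (\<rho> F)" for F
  have "FU_equivariant rh"
    unfolding FU_equivariant_def
  proof (intro ballI)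
    fix u F assume u: "u \<in> FU" and F: "F \<in> compact_distrs"
    obtain w where w: "w \<in> FU" "\<forall>F\<in>compact_distrs. \<rho> (Tu u F) = w (\<rho> F)"
      using B u by blast
    then have w_g: "w (g x) = g (u x)" for x
      using Tu_return[OF u, of x] return_in_compact_distrs[of x] unfolding g_def by metis
    have "rh (Tu u F) = inv g (w (g (rh F)))"
      using w(2) F \<open>bij g\<close> by (simp add: rh_def bij_is_surj surj_f_inv_f)
    also have "\<dots> = u (rh F)"
      using \<open>bij g\<close> by (simp add: w_g bij_is_inj)
    finally show "rh (Tu u F) = u (rh F)" .
  qed
  moreover have "\<forall>F\<in>compact_distrs. \<rho> F = g (rh F)"
    using \<open>bij g\<close> by (simp add: rh_def bij_is_surj surj_f_inv_f)
  ultimately show ?thesis using monotone \<open>bij g\<close> by (blast dest: bij_is_surj)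
qed

lemma FU_families_eq_if_equivariant_factorization:
  fixes \<rho> :: "real measure \<Rightarrow> real"
  assumes h: "strict_mono h \<or> strict_antimono_on UNIV h" "surj h"
    and rh: "FU_equivariant rh" and \<rho>: "\<forall>F\<in>compact_distrs. \<rho> F = h (rh F)"
  shows "(\<forall>u\<in>FU. \<exists>v\<in>FU. \<forall>F\<in>compact_distrs. u (\<rho> F) = \<rho> (Tu v F))
    \<and> (\<forall>v\<in>FU. \<exists>u\<in>FU. \<forall>F\<in>compact_distrs. \<rho> (Tu v F) = u (\<rho> F))"
proof -
  have "bij h" by (rule strict_monotone_surj_inv(1)[OF h])
  have \<rho>_Tu: "\<rho> (Tu v F) = h (v (rh F))" if "v \<in> FU" "F \<in> compact_distrs" for v F
    using rh \<rho> Tu_in_compact_distrs[OF that(2,1)] that unfolding FU_equivariant_def by simp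
  show ?thesis
  proof (intro conjI ballI)
    fix u assume "u \<in> FU"
    note v = FU_conjugate(1)[OF h this]
    have "\<forall>F\<in>compact_distrs. u (\<rho> F) = \<rho> (Tu (\<lambda>x. inv h (u (h x))) F)"
      using \<rho> \<rho>_Tu[OF v] \<open>bij h\<close> by (simp add: bij_is_surj surj_f_inv_f)
    then show "\<exists>v\<in>FU. \<forall>F\<in>compact_distrs. u (\<rho> F) = \<rho> (Tu v F)" by (rule bexI[OF _ v])
  next
    fix v assume v: "v \<in> FU"
    note u = FU_conjugate(2)[OF h v]
    have "\<forall>F\<in>compact_distrs. \<rho> (Tu v F) = h (v (inv h (\<rho> F)))"
      using \<rho> \<rho>_Tu[OF v] \<open>bij h\<close> by (simp add: bij_is_inj inv_f_f)
    then show "\<exists>u\<in>FU. \<forall>F\<in>compact_distrs. \<rho> (Tu v F) = u (\<rho> F)" by (rule bexI[OF _ u])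
  qed
qed

theorem proposition2:
  fixes \<rho> :: "real measure \<Rightarrow> real"
  shows "{(\<lambda>F\<in>compact_distrs. u (\<rho> F)) | u. u \<in> FU}
           = {(\<lambda>F\<in>compact_distrs. \<rho> (Tu u F)) | u. u \<in> FU}
     \<longleftrightarrow> (\<exists>h rh. ((\<forall>x y. x < y \<longrightarrow> h x < h y) \<or> (\<forall>x y. x < y \<longrightarrow> h y < h x))
               \<and> continuous_on UNIV h \<and> surj h
               \<and> is_quantile rh
               \<and> (\<forall>F\<in>compact_distrs. \<rho> F = h (rh F)))"
proof -
  have strictly_monotone_iff:
    "((\<forall>x y. x < y \<longrightarrow> h x < h y) \<or> (\<forall>x y. x < y \<longrightarrow> h y < h x))
      \<longleftrightarrow> strict_mono h \<or> strict_antimono_on UNIV h" for h :: "real \<Rightarrow> real"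
    by (simp add: strict_mono_def monotone_on_def)
  have continuous: "continuous_on UNIV h"
    if "strict_mono h \<or> strict_antimono_on UNIV h" "surj h" for h :: "real \<Rightarrow> real"
    using strict_monotone_surj_inv(2)[OF that] continuous_on_if_monotone_surj[OF _ that(2)] by blast
  show ?thesis
    unfolding Setcompr_restrict_eq_iff strictly_monotone_iff FU_equivariant_iff_quantile[symmetric]
  proof (rule iffI, goal_cases)
    case 1
    then obtain h rh where h: "strict_mono h \<or> strict_antimono_on UNIV h" "surj h"
      and rh: "FU_equivariant rh" "\<forall>F\<in>compact_distrs. \<rho> F = h (rh F)"
      using equivariant_factorization_if_FU_families_eq[of \<rho>] by auto
    then show ?case using continuous[OF h] by (intro exI conjI)
  next
    case 2
    then obtain h rh where h: "strict_mono h \<or> strict_antimono_on UNIV h" "surj h"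
      and rh: "FU_equivariant rh" "\<forall>F\<in>compact_distrs. \<rho> F = h (rh F)"
      by auto
    then show ?case by (rule FU_families_eq_if_equivariant_factorization)
  qed
qed

end
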